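(* Let $(\Omega,T)$ be a strictly ergodic subshift over a finite alphabet $A\subset\mathbb{R}$. Then $M^E$ is uniform for each $E\in\mathbb{R}$ with $\gamma(E)=0$.
   Context: Let $A\subset\mathbb{R}$ be finite with the discrete topology, $A^{\mathbb{Z}}$ with the product topology, and $T$ the shift $(Ta)(n)=a(n+1)$. A subshift is a closed $T$-invariant set $\Omega\subset A^{\mathbb{Z}}$; it is strictly ergodic if every orbit is dense and there is exactly one $T$-invariant Borel probability measure $\mu$ on $\Omega$. For $E\in\mathbb{R}$, $M^E(\omega)=\begin{pmatrix}E-\omega(1)&-1\\1&0\end{pmatrix}$, $M^E(n,\omega)=M^E(T^{n-1}\omega)\cdots M^E(\omega)$ for $n>0$, $\mathrm{Id}$ for $n=0$, $M^E(T^n\omega)^{-1}\cdots M^E(T^{-1}\omega)^{-1}$ for $n<0$. With $\|\cdot\|$ the operator norm, $\gamma(E)$ is the number with $\lim_{|n|\to\infty}\frac1{|n|}\log\|M^E(n,\omega)\|=\gamma(E)$ for $\mu$-a.e. $\omega$. $M^E$ is uniform if this limit exists for every $\omega\in\Omega$ and the convergence is uniform on $\Omega$. *)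

theory Defs
  imports "HOL-Analysis.Analysis" "HOL-Probability.Probability"
begin

definition shiftn :: "int \<Rightarrow> (int \<Rightarrow> real) \<Rightarrow> (int \<Rightarrow> real)" where
  "shiftn k w = (\<lambda>n. w (n + k))"

abbreviation shift :: "(int \<Rightarrow> real) \<Rightarrow> (int \<Rightarrow> real)" where
  "shift \<equiv> shiftn 1"

definition subshift :: "real set \<Rightarrow> (int \<Rightarrow> real) set \<Rightarrow> bool" where
  "subshift A \<Omega> \<longleftrightarrow> finite A \<and> \<Omega> \<subseteq> {w. \<forall>n. w n \<in> A} \<and> closed \<Omega> \<and> shift ` \<Omega> = \<Omega>"

definition orbit :: "(int \<Rightarrow> real) \<Rightarrow> (int \<Rightarrow> real) set" where
  "orbit w = {shiftn k w | k. True}"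

definition invariant_prob :: "(int \<Rightarrow> real) set \<Rightarrow> (int \<Rightarrow> real) measure \<Rightarrow> bool" where
  "invariant_prob \<Omega> \<mu> \<longleftrightarrow> prob_space \<mu> \<and> space \<mu> = \<Omega> \<and> sets \<mu> = sets (restrict_space borel \<Omega>)
     \<and> shift \<in> measurable \<mu> \<mu> \<and> distr \<mu> \<mu> shift = \<mu>"

definition strictly_ergodic :: "(int \<Rightarrow> real) set \<Rightarrow> bool" where
  "strictly_ergodic \<Omega> \<longleftrightarrow> (\<forall>w\<in>\<Omega>. \<Omega> \<subseteq> closure (orbit w)) \<and> (\<exists>!\<mu>. invariant_prob \<Omega> \<mu>)"

definition transfer :: "real \<Rightarrow> (int \<Rightarrow> real) \<Rightarrow> real^2^2" where
  "transfer E w = vector [vector [E - w 1, -1], vector [1, 0]]"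

fun cocycle_pos :: "real \<Rightarrow> (int \<Rightarrow> real) \<Rightarrow> nat \<Rightarrow> real^2^2" where
  "cocycle_pos E w 0 = mat 1"
| "cocycle_pos E w (Suc n) = transfer E (shiftn (int n) w) ** cocycle_pos E w n"

fun cocycle_neg :: "real \<Rightarrow> (int \<Rightarrow> real) \<Rightarrow> nat \<Rightarrow> real^2^2" where
  "cocycle_neg E w 0 = mat 1"
| "cocycle_neg E w (Suc m) = matrix_inv (transfer E (shiftn (- int (Suc m)) w)) ** cocycle_neg E w m"

definition cocycle :: "real \<Rightarrow> int \<Rightarrow> (int \<Rightarrow> real) \<Rightarrow> real^2^2" where
  "cocycle E n w = (if n \<ge> 0 then cocycle_pos E w (nat n) else cocycle_neg E w (nat (- n)))"

definition opnorm :: "real^2^2 \<Rightarrow> real" where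
  "opnorm M = onorm (\<lambda>x. M *v x)"

definition growth :: "real \<Rightarrow> int \<Rightarrow> (int \<Rightarrow> real) \<Rightarrow> real" where
  "growth E n w = ln (opnorm (cocycle E n w)) / real_of_int \<bar>n\<bar>"

definition lyap_limit :: "real \<Rightarrow> (int \<Rightarrow> real) \<Rightarrow> real \<Rightarrow> bool" where
  "lyap_limit E w g \<longleftrightarrow> ((\<lambda>n. growth E n w) \<longlongrightarrow> g) (sup at_top at_bot)"

definition uniform_cocycle :: "(int \<Rightarrow> real) set \<Rightarrow> real \<Rightarrow> bool" where
  "uniform_cocycle \<Omega> E \<longleftrightarrow> (\<exists>g. uniform_limit \<Omega> (\<lambda>n w. growth E n w) g (sup at_top at_bot))"

end

theory Submission
  imports Defs
begin

text \<open>Every transfer matrix has determinant one, so \<open>\<parallel>M\<^sup>E(n,\<omega>)\<parallel> \<ge> 1\<close> and all growth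
  rates are nonnegative; only a uniform upper bound is needed.  Negative times reduce to positive
  ones, since \<open>M\<^sup>E(-m,\<omega>)\<close> is the adjugate of \<open>M\<^sup>E(m,T\<^sup>-\<^sup>m\<omega>)\<close>, which has the same norm.
  The function \<open>log \<parallel>M\<^sup>E(n,\<omega>)\<parallel>\<close> is subadditive along orbits.  If for some \<open>\<epsilon> > 0\<close> there
  were arbitrarily long orbit segments along which it exceeds \<open>\<epsilon> n\<close>, the empirical pattern
  frequencies of these segments would have a cluster point, which defines a shift-invariant
  measure on \<open>\<Omega>\<close> (Krylov-Bogolyubov).  Cutting the segments into blocks of length \<open>N\<close> shows
  that this measure gives \<open>(1/N) \<integral> log \<parallel>M\<^sup>E(N,\<cdot>)\<parallel> \<ge> \<epsilon>\<close> for every \<open>N\<close>.  By unique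
  ergodicity the measure is \<open>\<mu>\<close>, for which these integrals tend to \<open>\<gamma>(E) = 0\<close> by dominated
  convergence.\<close>

section \<open>Two-by-two matrices\<close>

lemma norm_vec2: "norm (x::real^2) = sqrt ((x$1)^2 + (x$2)^2)"
  by (simp add: norm_vec_def L2_set_def sum_2)

lemma matrix_vector_mult_2:
  "(M *v (x::real^2)) $ 1 = M$1$1 * x$1 + M$1$2 * x$2"
  "(M *v (x::real^2)) $ 2 = M$2$1 * x$1 + M$2$2 * x$2"
  by (simp_all add: matrix_vector_mult_def sum_2)

lemma matrix_matrix_mult_2: "((A::real^2^2) ** B) $ i $ j = A$i$1 * B$1$j + A$i$2 * B$2$j"
  by (simp add: matrix_matrix_mult_def sum_2)

lemma vec2x2_eq_iff:
  "(A::real^2^2) = B \<longleftrightarrow> A$1$1 = B$1$1 \<and> A$1$2 = B$1$2 \<and> A$2$1 = B$2$1 \<and> A$2$2 = B$2$2"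
  by (auto simp: vec_eq_iff forall_2)

lemma norm_mult_le_opnorm: "norm (M *v x) \<le> opnorm M * norm x"
  unfolding opnorm_def by (rule onorm) simp

lemma opnorm_leI: "(\<And>x. norm (M *v x) \<le> b * norm x) \<Longrightarrow> opnorm M \<le> b"
  unfolding opnorm_def by (rule onorm_le)

lemma opnorm_nonneg: "0 \<le> opnorm M"
  unfolding opnorm_def by (rule onorm_pos_le) simp

lemma opnorm_mat_1: "opnorm (mat 1) = 1"
  by (simp add: opnorm_def onorm_id)

lemma opnorm_matrix_mul_le: "opnorm (A ** B) \<le> opnorm A * opnorm B"
proof -
  have "(\<lambda>x. (A ** B) *v x) = (\<lambda>x. A *v x) \<circ> (\<lambda>x. B *v x)"
    by (auto simp: matrix_vector_mul_assoc)
  then show ?thesis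
    unfolding opnorm_def by (metis onorm_compose matrix_vector_mul_bounded_linear)
qed

lemma opnorm_le_sum_abs: "opnorm M \<le> \<bar>M$1$1\<bar> + \<bar>M$1$2\<bar> + \<bar>M$2$1\<bar> + \<bar>M$2$2\<bar>"
proof (rule opnorm_leI)
  fix x :: "real^2"
  have x: "\<bar>x$1\<bar> \<le> norm x" "\<bar>x$2\<bar> \<le> norm x"
    by (simp_all add: component_le_norm_cart)
  have row: "\<bar>M$i$1 * x$1 + M$i$2 * x$2\<bar> \<le> (\<bar>M$i$1\<bar> + \<bar>M$i$2\<bar>) * norm x" for i
  proof -
    have "\<bar>M$i$1 * x$1 + M$i$2 * x$2\<bar> \<le> \<bar>M$i$1\<bar> * \<bar>x$1\<bar> + \<bar>M$i$2\<bar> * \<bar>x$2\<bar>"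
      by (metis abs_mult abs_triangle_ineq)
    also have "\<dots> \<le> \<bar>M$i$1\<bar> * norm x + \<bar>M$i$2\<bar> * norm x"
      using x by (intro add_mono mult_left_mono) auto
    finally show ?thesis by (simp add: algebra_simps)
  qed
  have "norm (M *v x) \<le> \<bar>(M *v x)$1\<bar> + \<bar>(M *v x)$2\<bar>"
    using norm_le_l1_cart[of "M *v x"] by (simp add: sum_2)
  also have "\<dots> \<le> (\<bar>M$1$1\<bar> + \<bar>M$1$2\<bar>) * norm x + (\<bar>M$2$1\<bar> + \<bar>M$2$2\<bar>) * norm x"
    using row by (simp add: matrix_vector_mult_2 add_mono)
  finally show "norm (M *v x) \<le> (\<bar>M$1$1\<bar> + \<bar>M$1$2\<bar> + \<bar>M$2$1\<bar> + \<bar>M$2$2\<bar>) * norm x"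
    by (simp add: algebra_simps)
qed

lemma opnorm_transpose_le: "opnorm (transpose M) \<le> opnorm M"
proof (rule opnorm_leI)
  fix x :: "real^2"
  define z where "z = transpose M *v x"
  have "norm z ^ 2 = inner x (M *v z)"
    by (simp add: z_def power2_norm_eq_inner dot_lmul_matrix)
  also have "\<dots> \<le> norm x * (opnorm M * norm z)"
    by (metis norm_cauchy_schwarz norm_ge_zero norm_mult_le_opnorm mult_left_mono order_trans)
  finally have "norm z * norm z \<le> (opnorm M * norm x) * norm z"
    by (simp add: power2_eq_square algebra_simps)
  then show "norm z \<le> opnorm M * norm x"
    by (cases "norm z = 0") (auto simp: opnorm_nonneg)
qed

definition adjugate2 :: "real^2^2 \<Rightarrow> real^2^2" where
  "adjugate2 M = (\<chi> i j. if i = 1 then (if j = 1 then M$2$2 else - M$1$2)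
                                   else (if j = 1 then - M$2$1 else M$1$1))"

lemma adjugate2_nth:
  "adjugate2 M $1$1 = M$2$2" "adjugate2 M $1$2 = - M$1$2"
  "adjugate2 M $2$1 = - M$2$1" "adjugate2 M $2$2 = M$1$1"
  by (simp_all add: adjugate2_def)

lemma adjugate2_matrix_mul: "adjugate2 (A ** B) = adjugate2 B ** adjugate2 A"
  by (simp add: vec2x2_eq_iff adjugate2_nth matrix_matrix_mult_2 algebra_simps)

lemma adjugate2_adjugate2 [simp]: "adjugate2 (adjugate2 A) = A"
  by (simp add: vec2x2_eq_iff adjugate2_nth)

lemma matrix_mul_adjugate2: "M ** adjugate2 M = mat (det M)" "adjugate2 M ** M = mat (det M)"
  by (simp_all add: vec2x2_eq_iff adjugate2_nth matrix_matrix_mult_2 det_2 mat_def algebra_simps)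

lemma matrix_inv_eq_adjugate2:
  assumes "det M = 1"
  shows "matrix_inv M = adjugate2 M"
  unfolding matrix_inv_def
proof (rule some_equality)
  show "M ** adjugate2 M = mat 1 \<and> adjugate2 M ** M = mat 1"
    using matrix_mul_adjugate2 assms by simp
  show "X = adjugate2 M" if "M ** X = mat 1 \<and> X ** M = mat 1" for X
    by (metis that matrix_mul_adjugate2(2) assms matrix_mul_assoc matrix_mul_rid)
qed

lemma opnorm_adjugate2_le: "opnorm (adjugate2 M) \<le> opnorm M"
proof -
  have "opnorm (adjugate2 M) \<le> opnorm (transpose M)"
  proof (rule opnorm_leI)
    fix x :: "real^2"
    \<comment> \<open>the adjugate is the transpose conjugated by the rotation by a right angle\<close>
    define y :: "real^2" where "y = vector [x$2, - x$1]"
    have "norm (adjugate2 M *v x) = norm (transpose M *v y)"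
      by (simp add: y_def norm_vec2 matrix_vector_mult_2 adjugate2_nth transpose_def
          algebra_simps power2_eq_square)
    also have "\<dots> \<le> opnorm (transpose M) * norm y" by (rule norm_mult_le_opnorm)
    also have "norm y = norm x" by (simp add: y_def norm_vec2 add.commute)
    finally show "norm (adjugate2 M *v x) \<le> opnorm (transpose M) * norm x" .
  qed
  then show ?thesis using opnorm_transpose_le[of M] by linarith
qed

lemma opnorm_adjugate2 [simp]: "opnorm (adjugate2 M) = opnorm M"
  by (metis adjugate2_adjugate2 antisym opnorm_adjugate2_le)

lemma one_le_opnorm_if_det_1:
  assumes "det M = 1"
  shows "1 \<le> opnorm M"
proof -
  have "1 = opnorm (M ** adjugate2 M)"
    using assms by (simp add: matrix_mul_adjugate2 opnorm_mat_1)
  also have "\<dots> \<le> opnorm M * opnorm M"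
    using opnorm_matrix_mul_le[of M "adjugate2 M"] by simp
  finally show ?thesis
    using opnorm_nonneg[of M] by (smt (verit) mult_left_le)
qed

section \<open>The transfer-matrix cocycle\<close>

lemma det_transfer: "det (transfer E w) = 1"
  by (simp add: det_2 transfer_def)

lemma opnorm_transfer_le: "opnorm (transfer E w) \<le> \<bar>E - w 1\<bar> + 2"
  using opnorm_le_sum_abs[of "transfer E w"] by (simp add: transfer_def)

lemma shiftn_shiftn: "shiftn a (shiftn b w) = shiftn (a + b) w"
  by (simp add: shiftn_def ac_simps)

lemma shiftn_0 [simp]: "shiftn 0 w = w"
  by (simp add: shiftn_def)

lemma shiftn_apply: "shiftn k w n = w (n + k)"
  by (simp add: shiftn_def)

lemma cocycle_pos_add:
  "cocycle_pos E w (n + m) = cocycle_pos E (shiftn (int n) w) m ** cocycle_pos E w n"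
proof (induction m)
  case 0
  then show ?case by simp
next
  case (Suc m)
  have "shiftn (int (n + m)) w = shiftn (int m) (shiftn (int n) w)"
    by (simp add: shiftn_shiftn add.commute)
  with Suc show ?case by (simp add: matrix_mul_assoc)
qed

lemma det_cocycle_pos: "det (cocycle_pos E w n) = 1"
  by (induction n) (simp_all add: det_mul det_transfer)

lemma cocycle_pos_cong:
  "(\<And>i. 1 \<le> i \<Longrightarrow> i \<le> int n \<Longrightarrow> v i = w i) \<Longrightarrow> cocycle_pos E v n = cocycle_pos E w n"
proof (induction n)
  case 0
  then show ?case by simp
next
  case (Suc n)
  have "transfer E (shiftn (int n) v) = transfer E (shiftn (int n) w)"
    using Suc.prems[of "1 + int n"] by (simp add: transfer_def shiftn_apply add.commute)
  with Suc show ?case by simp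
qed

lemma opnorm_cocycle_pos_le:
  assumes "\<And>i. \<bar>w i\<bar> \<le> B"
  shows "opnorm (cocycle_pos E w n) \<le> (\<bar>E\<bar> + B + 2) ^ n"
proof (induction n)
  case 0
  show ?case by (simp add: opnorm_mat_1)
next
  case (Suc n)
  have "opnorm (transfer E (shiftn (int n) w)) \<le> \<bar>E\<bar> + B + 2"
    using opnorm_transfer_le[of E "shiftn (int n) w"] assms[of "1 + int n"]
    by (simp add: shiftn_apply)
  then have "opnorm (transfer E (shiftn (int n) w)) * opnorm (cocycle_pos E w n)
      \<le> (\<bar>E\<bar> + B + 2) * (\<bar>E\<bar> + B + 2) ^ n"
    using Suc by (intro mult_mono) (auto intro: opnorm_nonneg order_trans[OF opnorm_nonneg])
  then show ?case
    using opnorm_matrix_mul_le[of "transfer E (shiftn (int n) w)" "cocycle_pos E w n"] by simp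
qed

lemma cocycle_neg_eq_adjugate2:
  "cocycle_neg E w m = adjugate2 (cocycle_pos E (shiftn (- int m) w) m)"
proof (induction m)
  case 0
  then show ?case by (simp add: vec2x2_eq_iff adjugate2_nth mat_def)
next
  case (Suc m)
  define v where "v = shiftn (- int (Suc m)) w"
  have "shiftn (int 1) v = shiftn (- int m) w"
    by (simp add: v_def shiftn_shiftn)
  then have "cocycle_pos E v (Suc m) = cocycle_pos E (shiftn (- int m) w) m ** transfer E v"
    using cocycle_pos_add[of E v 1 m] by simp
  with Suc show ?case
    by (simp add: v_def adjugate2_matrix_mul matrix_inv_eq_adjugate2 det_transfer)
qed

definition cocycle_log_norm :: "real \<Rightarrow> nat \<Rightarrow> (int \<Rightarrow> real) \<Rightarrow> real" where
  "cocycle_log_norm E n w = ln (opnorm (cocycle_pos E w n))"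

lemma one_le_opnorm_cocycle_pos: "1 \<le> opnorm (cocycle_pos E w n)"
  by (rule one_le_opnorm_if_det_1) (rule det_cocycle_pos)

lemma cocycle_log_norm_nonneg: "0 \<le> cocycle_log_norm E n w"
  unfolding cocycle_log_norm_def using one_le_opnorm_cocycle_pos by simp

lemma cocycle_log_norm_subadditive:
  "cocycle_log_norm E (n + m) w \<le> cocycle_log_norm E m (shiftn (int n) w) + cocycle_log_norm E n w"
proof -
  have pos: "0 < opnorm (cocycle_pos E v k)" for v k
    using one_le_opnorm_cocycle_pos by (rule less_le_trans[OF zero_less_one])
  have "cocycle_log_norm E (n + m) w
      \<le> ln (opnorm (cocycle_pos E (shiftn (int n) w) m) * opnorm (cocycle_pos E w n))"
    using pos[of w "n + m"] unfolding cocycle_log_norm_def cocycle_pos_add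
    by (intro ln_mono opnorm_matrix_mul_le)
  also have "\<dots> = cocycle_log_norm E m (shiftn (int n) w) + cocycle_log_norm E n w"
    unfolding cocycle_log_norm_def by (intro ln_mult_pos pos)
  finally show ?thesis .
qed

lemma cocycle_log_norm_le:
  assumes "\<And>i. \<bar>w i\<bar> \<le> B"
  shows "cocycle_log_norm E n w \<le> real n * ln (\<bar>E\<bar> + B + 2)"
proof -
  have "cocycle_log_norm E n w \<le> ln ((\<bar>E\<bar> + B + 2) ^ n)"
    unfolding cocycle_log_norm_def using one_le_opnorm_cocycle_pos[of E w n]
    by (intro ln_mono opnorm_cocycle_pos_le assms) simp
  then show ?thesis by (simp add: ln_realpow)
qed

lemma cocycle_log_norm_cong:
  assumes "\<And>i. 1 \<le> i \<Longrightarrow> i \<le> int n \<Longrightarrow> v i = w i"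
  shows "cocycle_log_norm E n v = cocycle_log_norm E n w"
  unfolding cocycle_log_norm_def using cocycle_pos_cong[OF assms] by simp

lemma growth_of_nat: "growth E (int n) w = cocycle_log_norm E n w / real n"
  by (simp add: growth_def cocycle_def cocycle_log_norm_def)

lemma growth_uminus_of_nat:
  "growth E (- int m) w = cocycle_log_norm E m (shiftn (- int m) w) / real m"
proof (cases "m = 0")
  case False
  then have "cocycle E (- int m) w = cocycle_neg E w m"
    by (simp add: cocycle_def)
  then show ?thesis
    by (simp add: growth_def cocycle_log_norm_def cocycle_neg_eq_adjugate2)
qed (simp add: growth_def)

section \<open>Subadditive sequences along an orbit\<close>

lemma sum_residue_classes_le:
  fixes g :: "nat \<Rightarrow> real"
  assumes nonneg: "\<And>j. 0 \<le> g j" and N: "0 < N"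
  shows "(\<Sum>r<N. \<Sum>i<(n - r) div N. g (r + i * N)) \<le> (\<Sum>j<n. g j)"
proof -
  define I where "I = Sigma {..<N} (\<lambda>r. {..<(n - r) div N})"
  have inj: "inj_on (\<lambda>(r, i). r + i * N) I"
  proof (rule inj_onI, clarsimp simp: I_def)
    fix r i r' i' assume "r < N" "r' < N" "r + i * N = r' + i' * N"
    then have "(r + i * N) mod N = (r' + i' * N) mod N" "(r + i * N) div N = (r' + i' * N) div N"
      by simp_all
    with \<open>r < N\<close> \<open>r' < N\<close> show "r = r' \<and> i = i'" by simp
  qed
  have sub: "(\<lambda>(r, i). r + i * N) ` I \<subseteq> {..<n}"
  proof clarsimp
    fix r i assume "(r, i) \<in> I"
    then have "r < N" "Suc i \<le> (n - r) div N" by (auto simp: I_def)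
    then have "Suc i * N \<le> n - r"
      by (metis div_times_less_eq_dividend le_trans mult_le_mono1)
    with N show "r + i * N < n" by simp
  qed
  have "(\<Sum>r<N. \<Sum>i<(n - r) div N. g (r + i * N)) = (\<Sum>(r, i)\<in>I. g (r + i * N))"
    unfolding I_def by (rule sum.Sigma) auto
  also have "\<dots> = sum g ((\<lambda>(r, i). r + i * N) ` I)"
    using inj by (simp add: sum.reindex case_prod_unfold)
  also have "\<dots> \<le> (\<Sum>j<n. g j)"
    using sub nonneg by (intro sum_mono2) auto
  finally show ?thesis .
qed

text \<open>The segment of length \<open>n\<close> is cut into blocks of length \<open>N\<close> starting at each of the
  \<open>N\<close> offsets; summing over the offsets, every block of the orbit is counted once and each
  offset loses at most two short end pieces.\<close>

lemma subadditive_block_bound: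
  fixes G :: "nat \<Rightarrow> nat \<Rightarrow> real"
  assumes sub: "\<And>a b j. G (a + b) j \<le> G b (j + a) + G a j"
    and nonneg: "\<And>a j. 0 \<le> G a j" and le: "\<And>a j. G a j \<le> real a * c" and N: "0 < N"
  shows "real N * G n 0 \<le> (\<Sum>j<n. G N j) + 2 * real N * real N * c"
proof -
  have "0 \<le> c" using nonneg[of 1 0] le[of 1 0] by simp
  then have short: "G a j \<le> real N * c" if "a \<le> N" for a j
    using le[of a j] that by (meson mult_right_mono of_nat_le_iff order_trans)
  have blocks: "G (k * N) j \<le> (\<Sum>i<k. G N (j + i * N))" for k j
  proof (induction k)
    case 0
    then show ?case using le[of 0 j] by simp
  next
    case (Suc k)
    have "G (k * N + N) j \<le> G N (j + k * N) + G (k * N) j" by (rule sub)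
    with Suc show ?case by (simp add: add.commute)
  qed
  have offset: "G n 0 \<le> (\<Sum>i<(n - r) div N. G N (r + i * N)) + 2 * real N * c" if "r < N" for r
  proof (cases "r \<le> n")
    case True
    define k where "k = (n - r) div N"
    define s where "s = (n - r) mod N"
    have n: "n = r + (k * N + s)" using True by (simp add: k_def s_def)
    have "G n 0 \<le> G (k * N + s) r + G r 0" using sub[of r "k * N + s" 0] n by simp
    also have "G (k * N + s) r \<le> G s (r + k * N) + G (k * N) r" by (rule sub)
    also have "G (k * N) r \<le> (\<Sum>i<k. G N (r + i * N))" by (rule blocks)
    also have "G s (r + k * N) \<le> real N * c" using N by (intro short) (simp add: s_def)
    also have "G r 0 \<le> real N * c" using that by (intro short) simp
    finally show ?thesis unfolding k_def by linarith
  next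
    case False
    then have "G n 0 \<le> real N * c" using that by (intro short) simp
    moreover have "0 \<le> real N * c" using \<open>0 \<le> c\<close> by simp
    ultimately show ?thesis using False by (simp add: mult.assoc)
  qed
  have "real N * G n 0 = (\<Sum>r<N. G n 0)" by simp
  also have "\<dots> \<le> (\<Sum>r<N. (\<Sum>i<(n - r) div N. G N (r + i * N)) + 2 * real N * c)"
    using offset by (intro sum_mono) simp
  also have "\<dots> = (\<Sum>r<N. \<Sum>i<(n - r) div N. G N (r + i * N)) + 2 * real N * real N * c"
    by (simp add: sum.distrib)
  also have "\<dots> \<le> (\<Sum>j<n. G N j) + 2 * real N * real N * c"
    using nonneg N by (simp add: sum_residue_classes_le)
  finally show ?thesis .
qed

section \<open>Subshifts and functions of finitely many coordinates\<close>

lemma subshift_shiftn_closed: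
  assumes "subshift A \<Omega>" and "w \<in> \<Omega>"
  shows "shiftn k w \<in> \<Omega>"
proof -
  have image: "shift ` \<Omega> = \<Omega>" using assms(1) by (simp add: subshift_def)
  have fwd: "shiftn 1 v \<in> \<Omega>" if "v \<in> \<Omega>" for v
    using image that by blast
  have bwd: "shiftn (- 1) v \<in> \<Omega>" if "v \<in> \<Omega>" for v
  proof -
    obtain u where "u \<in> \<Omega>" "v = shiftn 1 u" using image \<open>v \<in> \<Omega>\<close> by blast
    then show ?thesis by (simp add: shiftn_shiftn)
  qed
  show ?thesis
  proof (induction k rule: int_induct[where k = 0])
    case base
    then show ?case using assms(2) by simp
  next
    case (step1 i)
    then show ?case using fwd[of "shiftn i w"] by (simp add: shiftn_shiftn add.commute)
  next
    case (step2 i)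
    then show ?case using bwd[of "shiftn i w"] by (simp add: shiftn_shiftn)
  qed
qed

lemma subshift_values: "subshift A \<Omega> \<Longrightarrow> w \<in> \<Omega> \<Longrightarrow> w i \<in> A"
  unfolding subshift_def by blast

lemma subshift_bounded:
  assumes "subshift A \<Omega>"
  obtains B where "\<And>w i. w \<in> \<Omega> \<Longrightarrow> \<bar>w i\<bar> \<le> B"
proof
  fix w i assume "w \<in> \<Omega>"
  then show "\<bar>w i\<bar> \<le> (\<Sum>a\<in>A. \<bar>a\<bar>)"
    using assms subshift_values[OF assms] by (intro member_le_sum) (auto simp: subshift_def)
qed

lemma subshift_log_norm_bound:
  assumes "subshift A \<Omega>"
  obtains c where "0 \<le> c" and "\<And>n w. w \<in> \<Omega> \<Longrightarrow> cocycle_log_norm E n w \<le> real n * c"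
proof -
  obtain B where B: "\<And>w i. w \<in> \<Omega> \<Longrightarrow> \<bar>w i\<bar> \<le> B"
    using subshift_bounded[OF assms] by blast
  show ?thesis
  proof (cases "\<Omega> = {}")
    case False
    then obtain w where "w \<in> \<Omega>" by blast
    then have "0 \<le> B" using B[of w 0] by linarith
    then show ?thesis
      using B cocycle_log_norm_le by (intro that[of "ln (\<bar>E\<bar> + B + 2)"]) auto
  qed (use that[of 0] in simp)
qed

lemma invariant_probD:
  assumes "invariant_prob \<Omega> \<mu>"
  shows "prob_space \<mu>" and "space \<mu> = \<Omega>" and "sets \<mu> = sets (restrict_space borel \<Omega>)"
  using assms unfolding invariant_prob_def by blast+

lemma shift_borel_measurable: "shift \<in> borel_measurable (borel :: (int \<Rightarrow> real) measure)"
proof (rule measurable_coordinatewise_then_product)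
  fix i :: int
  have "(\<lambda>x :: int \<Rightarrow> real. x (i + 1)) \<in> borel_measurable borel"
    by (rule borel_measurable_continuous_onI[OF continuous_on_product_coordinates])
  then show "(\<lambda>x. shift x i) \<in> borel_measurable borel"
    by (simp add: shiftn_apply)
qed

definition depends_only_on :: "'i set \<Rightarrow> (('i \<Rightarrow> 'a) \<Rightarrow> 'b) \<Rightarrow> bool" where
  "depends_only_on J f \<longleftrightarrow> (\<forall>v w. restrict v J = restrict w J \<longrightarrow> f v = f w)"

lemma depends_only_on_restrict: "depends_only_on J f \<Longrightarrow> f (restrict w J) = f w"
  unfolding depends_only_on_def by (metis restrict_restrict inf.idem)

lemma depends_only_on_cocycle_log_norm: "depends_only_on {1..int N} (cocycle_log_norm E N)"
  unfolding depends_only_on_def by (metis atLeastAtMost_iff cocycle_log_norm_cong restrict_apply')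

lemma depends_only_on_shift:
  fixes f :: "(int \<Rightarrow> real) \<Rightarrow> 'b"
  assumes "depends_only_on J f"
  shows "depends_only_on ((\<lambda>i. i + 1) ` J) (\<lambda>v. f (shift v))"
  unfolding depends_only_on_def
proof (intro allI impI)
  fix v w :: "int \<Rightarrow> real" assume eq: "restrict v ((\<lambda>i. i + 1) ` J) = restrict w ((\<lambda>i. i + 1) ` J)"
  have "restrict (shift v) J = restrict (shift w) J"
  proof
    fix i show "restrict (shift v) J i = restrict (shift w) J i"
    proof (cases "i \<in> J")
      case True
      then have "i + 1 \<in> (\<lambda>i. i + 1) ` J" by blast
      then have "v (i + 1) = w (i + 1)"
        using fun_cong[OF eq, of "i + 1"] by simp
      with True show ?thesis by (simp add: shiftn_apply)
    qed simp
  qed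
  with assms show "f (shift v) = f (shift w)"
    unfolding depends_only_on_def by blast
qed

lemma closed_restrict_eq: "closed {w :: 'i \<Rightarrow> 'a::t2_space. restrict w J = y}"
proof (cases "y \<in> extensional J")
  case True
  then have "{w. restrict w J = y} = (\<Inter>i\<in>J. {w. w i = y i})"
    by (auto simp: fun_eq_iff extensional_def)
  then show ?thesis
    by (auto intro!: closed_Collect_eq continuous_on_product_coordinates)
next
  case False
  then have "{w. restrict w J = y} = {}" by auto
  then show ?thesis by simp
qed

lemma depends_only_on_eq_sum_patterns:
  fixes f :: "(int \<Rightarrow> real) \<Rightarrow> real"
  assumes "subshift A \<Omega>" and "finite J" and "depends_only_on J f" and "w \<in> \<Omega>"
  shows "f w = (\<Sum>y\<in>PiE J (\<lambda>_. A). f y * indicator {v. restrict v J = y} w)"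
proof -
  have "finite (PiE J (\<lambda>_. A))"
    using assms(1,2) by (simp add: subshift_def finite_PiE)
  moreover have "restrict w J \<in> PiE J (\<lambda>_. A)"
    using subshift_values[OF assms(1,4)] by auto
  ultimately have "(\<Sum>y\<in>PiE J (\<lambda>_. A). f y * indicator {v. restrict v J = y} w) = f (restrict w J)"
    by (simp add: indicator_def if_distrib[of "(*) _"] sum.delta' cong: sum.cong)
  also have "\<dots> = f w"
    using assms(3) by (rule depends_only_on_restrict)
  finally show ?thesis by simp
qed

lemma depends_only_on_measurable:
  fixes f :: "(int \<Rightarrow> real) \<Rightarrow> real"
  assumes "subshift A \<Omega>" and "finite J" and "depends_only_on J f"
  shows "f \<in> borel_measurable (restrict_space borel \<Omega>)"
proof -
  have "(\<lambda>w. \<Sum>y\<in>PiE J (\<lambda>_. A). f y * indicator {v. restrict v J = y} w)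
      \<in> borel_measurable (restrict_space borel \<Omega>)"
    by (intro borel_measurable_sum borel_measurable_times measurable_restrict_space1
        borel_measurable_const borel_measurable_indicator borel_closed closed_restrict_eq)
  then show ?thesis
    using depends_only_on_eq_sum_patterns[OF assms]
    by (subst measurable_cong) (simp_all add: space_restrict_space)
qed

lemma closed_notin_imp_window:
  fixes \<Omega> :: "('i \<Rightarrow> 'a::topological_space) set"
  assumes "closed \<Omega>" and "w \<notin> \<Omega>"
  obtains J where "finite J" and "\<And>v. v \<in> \<Omega> \<Longrightarrow> restrict v J \<noteq> restrict w J"
proof -
  have "open (- \<Omega>)"
    using assms(1) by (simp add: open_Compl)
  then have "openin (product_topology (\<lambda>_. euclidean) UNIV) (- \<Omega>)"
    by (simp add: open_fun_def)
  with assms(2) have "\<exists>U. finite {i \<in> UNIV. U i \<noteq> topspace euclidean} \<and> (\<forall>i\<in>UNIV. openin euclidean (U i))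
      \<and> w \<in> PiE UNIV U \<and> PiE UNIV U \<subseteq> - \<Omega>"
    unfolding openin_product_topology_alt by blast
  then obtain U where U: "finite {i. U i \<noteq> UNIV}" "w \<in> PiE UNIV U" "PiE UNIV U \<subseteq> - \<Omega>"
    by auto
  show ?thesis
  proof
    show "finite {i. U i \<noteq> UNIV}" by (rule U(1))
    fix v assume "v \<in> \<Omega>"
    show "restrict v {i. U i \<noteq> UNIV} \<noteq> restrict w {i. U i \<noteq> UNIV}"
    proof
      assume eq: "restrict v {i. U i \<noteq> UNIV} = restrict w {i. U i \<noteq> UNIV}"
      have "v i \<in> U i" for i
      proof (cases "U i = UNIV")
        case False
        then have "v i = w i" using fun_cong[OF eq, of i] by simp
        then show ?thesis using U(2) by auto
      qed simp
      then have "v \<in> PiE UNIV U" by auto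
      with U(3) \<open>v \<in> \<Omega>\<close> show False by auto
    qed
  qed
qed

lemma indicator_PiE_shift:
  fixes y :: "int \<Rightarrow> real"
  assumes "y \<in> extensional ((\<lambda>i. i + 1) ` J)"
  shows "indicator (PiE ((\<lambda>i. i + 1) ` J) (\<lambda>i. B (i - 1))) y
    = (indicator (PiE J B) (restrict (shift y) J) :: real)"
proof -
  have "y \<in> PiE ((\<lambda>i. i + 1) ` J) (\<lambda>i. B (i - 1)) \<longleftrightarrow> (\<forall>i\<in>J. y (i + 1) \<in> B i)"
    using assms unfolding PiE_iff by simp
  moreover have "restrict (shift y) J \<in> PiE J B \<longleftrightarrow> (\<forall>i\<in>J. y (i + 1) \<in> B i)"
    by (simp add: PiE_iff shiftn_apply)
  ultimately show ?thesis
    unfolding indicator_def by simp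
qed

section \<open>An invariant measure from long orbit segments\<close>

lemma cluster_point_le_0:
  fixes g :: "'a::topological_space \<Rightarrow> real"
  assumes cluster: "inf (nhds x) (filtermap f F) \<noteq> bot"
    and "continuous_on UNIV g"
    and small: "\<And>\<delta>. \<delta> > 0 \<Longrightarrow> eventually (\<lambda>k. g (f k) \<le> \<delta>) F"
  shows "g x \<le> 0"
proof (rule ccontr)
  assume "\<not> g x \<le> 0"
  define U where "U = g -` {g x / 2 <..}"
  have "open U"
    unfolding U_def using \<open>continuous_on UNIV g\<close> by (intro open_vimage) simp_all
  moreover have "x \<in> U"
    using \<open>\<not> g x \<le> 0\<close> by (simp add: U_def)
  ultimately have "eventually (\<lambda>y. y \<in> U) (nhds x)"
    by (rule eventually_nhds_in_open)
  moreover have "eventually (\<lambda>y. y \<notin> U) (filtermap f F)"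
    using small[of "g x / 2"] \<open>\<not> g x \<le> 0\<close> by (simp add: eventually_filtermap U_def not_less)
  ultimately have "eventually (\<lambda>_. False) (inf (nhds x) (filtermap f F))"
    unfolding eventually_inf by blast
  with cluster show False by (simp add: eventually_False)
qed

lemma prod_emb_UNIV_borel:
  "prod_emb UNIV (\<lambda>_. borel :: 'a::topological_space measure) J X = {w. restrict w J \<in> X}"
  by (auto simp: prod_emb_def space_PiM)

lemma singleton_in_sets_PiM:
  assumes "finite J" and "y \<in> extensional J"
  shows "{y} \<in> sets (PiM J (\<lambda>_. borel :: 'a::t1_space measure))"
proof -
  from assms have "{y} = PiE J (\<lambda>i. {y i})"
    by (force simp: PiE_iff extensional_def fun_eq_iff)
  with \<open>finite J\<close> show ?thesis by (simp add: sets_PiM_I_finite)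
qed

lemma continuous_on_coordinate [continuous_intros]: "continuous_on S (\<lambda>x :: 'i \<Rightarrow> real. x i)"
  by (rule continuous_on_subset[OF continuous_on_product_coordinates]) simp

locale orbit_segments =
  fixes A :: "real set" and \<Omega> :: "(int \<Rightarrow> real) set"
    and len :: "nat \<Rightarrow> nat" and start :: "nat \<Rightarrow> int \<Rightarrow> real"
  assumes subshift_\<Omega>: "subshift A \<Omega>" and start_in: "\<And>k. start k \<in> \<Omega>"
    and len_gt: "\<And>k. k < len k"
begin

definition patterns :: "int set \<Rightarrow> (int \<Rightarrow> real) set" where
  "patterns J = PiE J (\<lambda>_. A)"

definition orbit_average :: "((int \<Rightarrow> real) \<Rightarrow> real) \<Rightarrow> nat \<Rightarrow> real" where
  "orbit_average f k = (\<Sum>j<len k. f (shiftn (int j) (start k))) / real (len k)"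

text \<open>A frequency vector is indexed by all pairs of a window \<open>J\<close> and a pattern \<open>y\<close> on it, so
  that all of them live in one compact product space.\<close>

definition freq :: "nat \<Rightarrow> int set \<times> (int \<Rightarrow> real) \<Rightarrow> real" where
  "freq k = (\<lambda>(J, y). orbit_average (indicator {v. restrict v J = y}) k)"

lemma finite_patterns: "finite J \<Longrightarrow> finite (patterns J)"
  using subshift_\<Omega> by (simp add: patterns_def subshift_def finite_PiE)

lemma restrict_pattern: "y \<in> patterns J \<Longrightarrow> restrict y J = y"
  by (auto simp: patterns_def PiE_def extensional_def fun_eq_iff)

lemma orbit_in: "shiftn k (start k') \<in> \<Omega>"
  by (rule subshift_shiftn_closed[OF subshift_\<Omega> start_in])

lemma len_pos: "0 < real (len k)"
  using len_gt[of k] by simp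

lemma orbit_average_sum:
  "orbit_average (\<lambda>v. \<Sum>y\<in>Y. c y * g y v) k = (\<Sum>y\<in>Y. c y * orbit_average (g y) k)"
  unfolding orbit_average_def
  by (simp add: sum_divide_distrib sum_distrib_left sum.swap[of _ Y] mult.assoc)

lemma orbit_average_depends_only_on:
  assumes "finite J" and "depends_only_on J f"
  shows "orbit_average f k = (\<Sum>y\<in>patterns J. f y * freq k (J, y))"
proof -
  have "orbit_average f k
      = orbit_average (\<lambda>v. \<Sum>y\<in>patterns J. f y * indicator {v. restrict v J = y} v) k"
    unfolding orbit_average_def patterns_def
    using depends_only_on_eq_sum_patterns[OF subshift_\<Omega> assms orbit_in] by simp
  then show ?thesis
    by (simp add: orbit_average_sum freq_def)
qed

lemma orbit_average_const [simp]: "orbit_average (\<lambda>_. c) k = c"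
  using len_pos[of k] by (simp add: orbit_average_def)

lemma orbit_average_shift:
  assumes "\<And>v. \<bar>f v\<bar> \<le> B"
  shows "\<bar>orbit_average (\<lambda>v. f (shift v)) k - orbit_average f k\<bar> \<le> 2 * B / real (len k)"
proof -
  define u where "u j = f (shiftn (int j) (start k))" for j
  have "shift (shiftn (int j) (start k)) = shiftn (int (Suc j)) (start k)" for j
    by (simp add: shiftn_shiftn add.commute)
  then have "orbit_average (\<lambda>v. f (shift v)) k - orbit_average f k
      = (\<Sum>j<len k. u (Suc j) - u j) / real (len k)"
    by (simp add: orbit_average_def u_def sum_subtractf diff_divide_distrib)
  also have "\<dots> = (u (len k) - u 0) / real (len k)"
    by (simp add: sum_lessThan_telescope)
  finally show ?thesis
    using assms[of "shiftn (int (len k)) (start k)"] assms[of "start k"] len_pos[of k]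
    by (simp add: u_def abs_divide divide_right_mono)
qed

lemma freq_nonneg: "0 \<le> freq k i"
  by (cases i) (auto simp: freq_def orbit_average_def intro!: divide_nonneg_nonneg sum_nonneg)

lemma freq_le_1: "freq k i \<le> 1"
proof -
  have "(\<Sum>j<len k. indicator X (v j)) \<le> (\<Sum>j<len k. 1 :: real)" for X and v :: "nat \<Rightarrow> int \<Rightarrow> real"
    by (intro sum_mono) (simp add: indicator_def)
  then show ?thesis
    using len_pos[of k] by (cases i) (simp add: freq_def orbit_average_def)
qed

definition limit_freq :: "int set \<times> (int \<Rightarrow> real) \<Rightarrow> real" where
  "limit_freq = (SOME x. inf (nhds x) (filtermap freq sequentially) \<noteq> bot)"

lemma limit_freq_cluster: "inf (nhds limit_freq) (filtermap freq sequentially) \<noteq> bot"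
proof -
  define K :: "(int set \<times> (int \<Rightarrow> real) \<Rightarrow> real) set" where "K = PiE UNIV (\<lambda>_. {0..1})"
  have "compactin (product_topology (\<lambda>_. euclidean) UNIV) K"
    unfolding K_def compactin_PiE by (simp add: compactin_euclidean_iff)
  then have "compact K"
    by (simp add: euclidean_product_topology compactin_euclidean_iff)
  moreover have "eventually (\<lambda>x. x \<in> K) (filtermap freq sequentially)"
    by (simp add: K_def eventually_filtermap PiE_iff freq_nonneg freq_le_1)
  moreover have "filtermap freq sequentially \<noteq> bot"
    by (simp add: filtermap_bot_iff)
  ultimately obtain x where "inf (nhds x) (filtermap freq sequentially) \<noteq> bot"
    unfolding compact_filter by blast
  then show ?thesis
    unfolding limit_freq_def
    by (rule someI[where P = "\<lambda>x. inf (nhds x) (filtermap freq sequentially) \<noteq> bot"])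
qed

lemma limit_freq_le_0:
  assumes "continuous_on UNIV g"
    and "\<And>\<delta>. \<delta> > 0 \<Longrightarrow> eventually (\<lambda>k. g (freq k) \<le> \<delta>) sequentially"
  shows "g limit_freq \<le> (0 :: real)"
  by (rule cluster_point_le_0[OF limit_freq_cluster assms(1)]) (rule assms(2))

lemma limit_freq_eqI:
  assumes "continuous_on UNIV L" and "continuous_on UNIV R"
    and "\<And>\<delta>. \<delta> > 0 \<Longrightarrow> eventually (\<lambda>k. \<bar>L (freq k) - R (freq k)\<bar> \<le> \<delta>) sequentially"
  shows "L limit_freq = (R limit_freq :: real)"
proof -
  have "(\<lambda>x. \<bar>L x - R x\<bar>) limit_freq \<le> 0"
    using assms by (intro limit_freq_le_0) (auto intro!: continuous_intros)
  then show ?thesis by simp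
qed

lemma eventually_le_div_len:
  assumes "0 < \<delta>"
  shows "eventually (\<lambda>k. C / real (len k) \<le> \<delta>) sequentially"
proof -
  have "filterlim (\<lambda>k. real (len k)) at_top sequentially"
    using len_gt
    by (intro filterlim_at_top_mono[OF filterlim_real_sequentially] always_eventually allI)
      (simp add: less_imp_le)
  then have "((\<lambda>k. C / real (len k)) \<longlongrightarrow> 0) sequentially"
    by (intro tendsto_divide_0[OF tendsto_const] filterlim_at_top_imp_at_infinity)
  then show ?thesis
    using assms by (rule order_tendstoD(2)[THEN eventually_mono]) simp
qed

lemma limit_freq_nonneg: "0 \<le> limit_freq i"
proof -
  have "(\<lambda>x. - x i) limit_freq \<le> 0"
  proof (rule limit_freq_le_0)
    fix \<delta> :: real assume "0 < \<delta>"
    show "eventually (\<lambda>k. - freq k i \<le> \<delta>) sequentially"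
      using freq_nonneg[of _ i] \<open>0 < \<delta>\<close> by (intro always_eventually allI) (smt (verit))
  qed (intro continuous_intros)
  then show ?thesis by simp
qed

lemma limit_freq_depends_only_on:
  assumes "finite J" "depends_only_on J f" "finite H" "depends_only_on H f"
  shows "(\<Sum>y\<in>patterns J. f y * limit_freq (J, y)) = (\<Sum>y\<in>patterns H. f y * limit_freq (H, y))"
  using orbit_average_depends_only_on[OF assms(1,2), symmetric]
    orbit_average_depends_only_on[OF assms(3,4), symmetric]
  by (intro limit_freq_eqI[where L = "\<lambda>x. \<Sum>y\<in>patterns J. f y * x (J, y)"
        and R = "\<lambda>x. \<Sum>y\<in>patterns H. f y * x (H, y)"]) (auto intro!: continuous_intros)

lemma limit_freq_sum_patterns:
  assumes "finite J"
  shows "(\<Sum>y\<in>patterns J. limit_freq (J, y)) = 1"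
proof -
  have "(\<lambda>x. \<Sum>y\<in>patterns J. 1 * x (J, y)) limit_freq = (\<lambda>x. 1) limit_freq"
    using orbit_average_depends_only_on[OF assms, of "\<lambda>_. 1"]
    by (intro limit_freq_eqI) (auto simp: depends_only_on_def intro!: continuous_intros)
  then show ?thesis by simp
qed

lemma limit_freq_shift:
  assumes "finite J" "depends_only_on J f" "finite J'" "depends_only_on J' (\<lambda>v. f (shift v))"
    and "\<And>v. \<bar>f v\<bar> \<le> B"
  shows "(\<Sum>y\<in>patterns J'. f (shift y) * limit_freq (J', y)) = (\<Sum>y\<in>patterns J. f y * limit_freq (J, y))"
proof (rule limit_freq_eqI)
  fix \<delta> :: real assume "0 < \<delta>"
  have "\<bar>(\<Sum>y\<in>patterns J'. f (shift y) * freq k (J', y))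
      - (\<Sum>y\<in>patterns J. f y * freq k (J, y))\<bar> \<le> 2 * B / real (len k)" for k
    using orbit_average_shift[where f = f and B = B and k = k] assms(5)
    by (simp add: orbit_average_depends_only_on[OF assms(1,2)] orbit_average_depends_only_on[OF assms(3,4)])
  then show "eventually (\<lambda>k. \<bar>(\<Sum>y\<in>patterns J'. f (shift y) * freq k (J', y))
      - (\<Sum>y\<in>patterns J. f y * freq k (J, y))\<bar> \<le> \<delta>) sequentially"
    using eventually_le_div_len[OF \<open>0 < \<delta>\<close>, of "2 * B"] by (auto elim!: eventually_mono intro: order_trans)
qed (auto intro!: continuous_intros)

lemma limit_freq_eq_0:
  assumes "finite J" and "\<And>v. v \<in> \<Omega> \<Longrightarrow> restrict v J \<noteq> y"
  shows "limit_freq (J, y) = 0"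
proof -
  have "freq k (J, y) = 0" for k
    using assms(2)[OF orbit_in] by (simp add: freq_def orbit_average_def indicator_def)
  then have "(\<lambda>x. x (J, y)) limit_freq = (\<lambda>x. 0) limit_freq"
    by (intro limit_freq_eqI) (auto intro!: continuous_intros)
  then show ?thesis by simp
qed

definition marginal :: "int set \<Rightarrow> (int \<Rightarrow> real) measure" where
  "marginal J = distr (point_measure (patterns J) (\<lambda>y. ennreal (limit_freq (J, y))))
     (PiM J (\<lambda>_. borel)) (\<lambda>x. x)"

lemma patterns_subset_space: "patterns J \<subseteq> space (PiM J (\<lambda>_. borel :: real measure))"
  by (auto simp: patterns_def space_PiM PiE_iff)

lemma sets_marginal: "sets (marginal J) = sets (PiM J (\<lambda>_. borel))"
  by (simp add: marginal_def)

lemma emeasure_marginal: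
  assumes "finite J" and "X \<in> sets (PiM J (\<lambda>_. borel))"
  shows "emeasure (marginal J) X = ennreal (\<Sum>y\<in>patterns J \<inter> X. limit_freq (J, y))"
proof -
  have "(\<lambda>x. x) \<in> measurable (point_measure (patterns J) f) (PiM J (\<lambda>_. borel))" for f
    using patterns_subset_space by (auto simp: measurable_point_measure_eq1)
  then have "emeasure (marginal J) X
      = emeasure (point_measure (patterns J) (\<lambda>y. ennreal (limit_freq (J, y)))) (patterns J \<inter> X)"
    unfolding marginal_def using assms(2)
    by (subst emeasure_distr) (auto simp: Int_commute space_point_measure)
  also have "\<dots> = (\<Sum>y\<in>patterns J \<inter> X. ennreal (limit_freq (J, y)))"
    using assms(1) by (intro emeasure_point_measure_finite) (auto simp: finite_patterns)
  also have "\<dots> = ennreal (\<Sum>y\<in>patterns J \<inter> X. limit_freq (J, y))"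
    by (rule sum_ennreal) (simp add: limit_freq_nonneg)
  finally show ?thesis .
qed

lemma sum_patterns_Int: "finite J \<Longrightarrow>
  (\<Sum>y\<in>patterns J \<inter> X. limit_freq (J, y)) = (\<Sum>y\<in>patterns J. indicator X y * limit_freq (J, y))"
  by (simp add: sum.inter_restrict finite_patterns indicator_def)

lemma limit_freq_consistent:
  assumes "finite H" and "J \<subseteq> H"
  shows "(\<Sum>y\<in>patterns H \<inter> {x. restrict x J \<in> X}. limit_freq (H, y))
       = (\<Sum>y\<in>patterns J \<inter> X. limit_freq (J, y))"
proof -
  define f where "f v = (indicator X (restrict v J) :: real)" for v :: "int \<Rightarrow> real"
  have "finite J" using assms finite_subset by blast
  have "depends_only_on J f"
    by (simp add: depends_only_on_def f_def)
  have "depends_only_on H f"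
    unfolding depends_only_on_def f_def
  proof (intro allI impI)
    fix v w :: "int \<Rightarrow> real" assume "restrict v H = restrict w H"
    then have "restrict (restrict v H) J = restrict (restrict w H) J" by simp
    then show "indicator X (restrict v J) = (indicator X (restrict w J) :: real)"
      by (simp add: Int_absorb1[OF assms(2)])
  qed
  have "(\<Sum>y\<in>patterns H \<inter> {x. restrict x J \<in> X}. limit_freq (H, y))
      = (\<Sum>y\<in>patterns H. f y * limit_freq (H, y))"
    by (simp add: sum_patterns_Int[OF assms(1)] f_def indicator_def)
  also have "\<dots> = (\<Sum>y\<in>patterns J. f y * limit_freq (J, y))"
    by (rule limit_freq_depends_only_on) fact+
  also have "\<dots> = (\<Sum>y\<in>patterns J \<inter> X. limit_freq (J, y))"
    by (simp add: sum_patterns_Int[OF \<open>finite J\<close>] f_def restrict_pattern)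
  finally show ?thesis .
qed

lemma prob_space_marginal:
  assumes "finite J"
  shows "prob_space (marginal J)"
proof (rule prob_spaceI)
  have "space (marginal J) = space (PiM J (\<lambda>_. borel))"
    by (simp add: marginal_def)
  then have "emeasure (marginal J) (space (marginal J))
      = ennreal (\<Sum>y\<in>patterns J \<inter> space (PiM J (\<lambda>_. borel)). limit_freq (J, y))"
    by (simp only: emeasure_marginal[OF assms sets.top])
  also have "patterns J \<inter> space (PiM J (\<lambda>_. borel)) = patterns J"
    by (rule Int_absorb2[OF patterns_subset_space])
  finally show "emeasure (marginal J) (space (marginal J)) = 1"
    by (simp add: limit_freq_sum_patterns[OF assms])
qed

lemma polish_projective_marginal: "polish_projective UNIV marginal"
  unfolding polish_projective_def
proof (rule projective_family.intro)
  fix J H :: "int set" assume JH: "J \<subseteq> H" "finite H" "H \<subseteq> UNIV"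
  then have "finite J" using finite_subset by blast
  have restr: "(\<lambda>f. restrict f J) \<in> measurable (marginal H) (PiM J (\<lambda>_. borel))"
    using measurable_restrict_subset[OF JH(1)] by (simp add: measurable_cong_sets[OF sets_marginal refl])
  show "marginal J = distr (marginal H) (PiM J (\<lambda>_. borel)) (\<lambda>f. restrict f J)"
  proof (rule measure_eqI)
    fix X assume "X \<in> sets (marginal J)"
    then have X: "X \<in> sets (PiM J (\<lambda>_. borel))" by (simp add: sets_marginal)
    have pre: "(\<lambda>f. restrict f J) -` X \<inter> space (marginal H) \<in> sets (PiM H (\<lambda>_. borel))"
      using measurable_sets[OF restr X] by (simp add: sets_marginal)
    have "emeasure (distr (marginal H) (PiM J (\<lambda>_. borel)) (\<lambda>f. restrict f J)) X
        = emeasure (marginal H) ((\<lambda>f. restrict f J) -` X \<inter> space (marginal H))"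
      by (rule emeasure_distr[OF restr X])
    also have "\<dots> = ennreal (\<Sum>y\<in>patterns H \<inter> ((\<lambda>f. restrict f J) -` X \<inter> space (marginal H)). limit_freq (H, y))"
      by (rule emeasure_marginal[OF JH(2) pre])
    also have "patterns H \<inter> ((\<lambda>f. restrict f J) -` X \<inter> space (marginal H))
        = patterns H \<inter> {x. restrict x J \<in> X}"
      using patterns_subset_space[of H] by (auto simp: marginal_def)
    also have "(\<Sum>y\<in>patterns H \<inter> {x. restrict x J \<in> X}. limit_freq (H, y))
        = (\<Sum>y\<in>patterns J \<inter> X. limit_freq (J, y))"
      by (rule limit_freq_consistent[OF JH(2,1)])
    also have "ennreal \<dots> = emeasure (marginal J) X"
      by (rule emeasure_marginal[OF \<open>finite J\<close> X, symmetric])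
    finally show "emeasure (marginal J) X
        = emeasure (distr (marginal H) (PiM J (\<lambda>_. borel)) (\<lambda>f. restrict f J)) X" ..
  qed (simp add: sets_marginal)
qed (simp add: prob_space_marginal)

definition limit_measure :: "(int \<Rightarrow> real) measure" where
  "limit_measure = projective_family.lim UNIV marginal (\<lambda>_. borel)"

lemma sets_limit_measure: "sets limit_measure = sets borel"
  unfolding limit_measure_def
  using projective_family.sets_lim[OF polish_projective_marginal[unfolded polish_projective_def]]
  by (simp add: sets_PiM_equal_borel)

lemma space_limit_measure: "space limit_measure = UNIV"
  unfolding limit_measure_def
  using projective_family.space_lim[OF polish_projective_marginal[unfolded polish_projective_def]]
  by (simp add: space_PiM)

lemma emeasure_limit_measure_cylinder:
  assumes "finite J" and "X \<in> sets (PiM J (\<lambda>_. borel))"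
  shows "emeasure limit_measure {w. restrict w J \<in> X} = ennreal (\<Sum>y\<in>patterns J \<inter> X. limit_freq (J, y))"
  using polish_projective.emeasure_lim_emb[OF polish_projective_marginal _ assms]
  by (simp add: limit_measure_def prod_emb_UNIV_borel emeasure_marginal assms)

lemma cylinder_in_sets: "X \<in> sets (PiM J (\<lambda>_. borel)) \<Longrightarrow> {w. restrict w J \<in> X} \<in> sets limit_measure"
  using measurable_prod_emb[of J UNIV X "\<lambda>_. borel :: real measure"]
  by (simp add: prod_emb_UNIV_borel sets_limit_measure sets_PiM_equal_borel)

lemma prob_space_limit_measure: "prob_space limit_measure"
proof (rule prob_spaceI)
  let ?S = "space (PiM {} (\<lambda>_. borel :: real measure))"
  have "space limit_measure = {w. restrict w {} \<in> ?S}"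
    by (auto simp: space_limit_measure space_PiM)
  then have "emeasure limit_measure (space limit_measure)
      = ennreal (\<Sum>y\<in>patterns {} \<inter> ?S. limit_freq ({}, y))"
    by (simp only: emeasure_limit_measure_cylinder[OF finite.emptyI sets.top])
  also have "patterns {} \<inter> ?S = patterns {}"
    by (rule Int_absorb2[OF patterns_subset_space])
  finally show "emeasure limit_measure (space limit_measure) = 1"
    by (simp add: limit_freq_sum_patterns)
qed

lemma null_sets_cylinder_outside:
  assumes "finite J" and "y \<in> patterns J" and "\<And>v. v \<in> \<Omega> \<Longrightarrow> restrict v J \<noteq> y"
  shows "{w. restrict w J = y} \<in> null_sets limit_measure"
proof -
  have y: "{y} \<in> sets (PiM J (\<lambda>_. borel))"
    using assms(1,2) by (intro singleton_in_sets_PiM) (auto simp: patterns_def PiE_iff)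
  have "emeasure limit_measure {w. restrict w J \<in> {y}} = 0"
    unfolding emeasure_limit_measure_cylinder[OF assms(1) y]
    using assms(2) by (simp add: limit_freq_eq_0[OF assms(1,3)])
  then show ?thesis
    by (simp add: null_sets_def sets_limit_measure borel_closed closed_restrict_eq)
qed

lemma null_sets_value_outside: "{w. w i \<notin> A} \<in> null_sets limit_measure"
proof -
  have "- A \<in> sets borel"
    using subshift_\<Omega> by (simp add: subshift_def finite_imp_closed borel_closed sets.compl_sets)
  then have X: "PiE {i} (\<lambda>_. - A) \<in> sets (PiM {i} (\<lambda>_. borel))"
    by (simp add: sets_PiM_I_finite)
  have eq: "{w. w i \<notin> A} = {w. restrict w {i} \<in> PiE {i} (\<lambda>_. - A)}"
    by (auto simp: PiE_iff)
  have "patterns {i} \<inter> PiE {i} (\<lambda>_. - A) = {}"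
    by (auto simp: patterns_def PiE_iff)
  then have "emeasure limit_measure {w. restrict w {i} \<in> PiE {i} (\<lambda>_. - A)} = 0"
    unfolding emeasure_limit_measure_cylinder[OF finite.insertI[OF finite.emptyI] X] by simp
  with cylinder_in_sets[OF X] show ?thesis
    unfolding null_sets_def eq by blast
qed

text \<open>Outside the closed set \<open>\<Omega>\<close>, some coordinate leaves \<open>A\<close> or some finite window
  shows a pattern that never occurs in \<open>\<Omega>\<close>; there are only countably many such cylinders.\<close>

lemma null_sets_outside: "UNIV - \<Omega> \<in> null_sets limit_measure"
proof -
  define bad where "bad = {(J, y). finite J \<and> y \<in> patterns J \<and> (\<forall>v\<in>\<Omega>. restrict v J \<noteq> y)}"
  have "countable bad"
  proof (rule countable_subset)
    show "bad \<subseteq> Sigma {J. finite J} patterns" by (auto simp: bad_def)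
    show "countable (Sigma {J. finite J} patterns)"
      by (intro countable_SIGMA countable_Collect_finite countable_finite) (auto simp: finite_patterns)
  qed
  then have null: "(\<Union>i. {w. w i \<notin> A}) \<union> (\<Union>(J, y)\<in>bad. {w. restrict w J = y}) \<in> null_sets limit_measure"
    using null_sets_cylinder_outside null_sets_value_outside
    by (intro null_sets.Un null_sets_UN' null_sets_UN) (auto simp: bad_def)
  have cover: "UNIV - \<Omega> \<subseteq> (\<Union>i. {w. w i \<notin> A}) \<union> (\<Union>(J, y)\<in>bad. {w. restrict w J = y})"
  proof
    fix w assume "w \<in> UNIV - \<Omega>"
    show "w \<in> (\<Union>i. {w. w i \<notin> A}) \<union> (\<Union>(J, y)\<in>bad. {w. restrict w J = y})"
    proof (cases "\<forall>i. w i \<in> A")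
      case True
      obtain J where "finite J" "\<And>v. v \<in> \<Omega> \<Longrightarrow> restrict v J \<noteq> restrict w J"
        using subshift_\<Omega> \<open>w \<in> UNIV - \<Omega>\<close> closed_notin_imp_window
        by (metis DiffD2 subshift_def)
      with True have "(J, restrict w J) \<in> bad" by (auto simp: bad_def patterns_def)
      then show ?thesis by blast
    qed blast
  qed
  have "UNIV - \<Omega> \<in> sets limit_measure"
    using subshift_\<Omega> by (auto simp: sets_limit_measure subshift_def)
  from null this cover show ?thesis by (rule null_sets_subset)
qed

lemma shift_measurable: "shift \<in> measurable limit_measure limit_measure"
  using shift_borel_measurable
  by (simp add: measurable_cong_sets[OF sets_limit_measure sets_limit_measure])

lemma emeasure_limit_measure_shifted_cylinder:
  assumes J: "finite J" and B: "\<And>i. i \<in> J \<Longrightarrow> B i \<in> sets borel"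
  shows "emeasure limit_measure {w. restrict w ((\<lambda>i. i + 1) ` J) \<in> PiE ((\<lambda>i. i + 1) ` J) (\<lambda>i. B (i - 1))}
    = emeasure limit_measure {w. restrict w J \<in> PiE J B}"
proof -
  define J' where "J' = (\<lambda>i. i + 1) ` J"
  define B' where "B' i = B (i - 1)" for i
  define f where "f v = (indicator (PiE J B) (restrict v J) :: real)" for v :: "int \<Rightarrow> real"
  have "finite J'" using J by (simp add: J'_def)
  have f: "depends_only_on J f"
    by (simp add: depends_only_on_def f_def)
  have f_shift: "depends_only_on J' (\<lambda>v. f (shift v))"
    unfolding J'_def by (rule depends_only_on_shift[OF f])
  have X: "PiE J B \<in> sets (PiM J (\<lambda>_. borel))"
    using B J by (simp add: sets_PiM_I_finite)
  have X': "PiE J' B' \<in> sets (PiM J' (\<lambda>_. borel))"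
    using B J by (intro sets_PiM_I_finite) (auto simp: J'_def B'_def)
  have "indicator (PiE J' B') y = f (shift y)" if "y \<in> patterns J'" for y
    unfolding J'_def B'_def f_def
    by (rule indicator_PiE_shift) (use that in \<open>auto simp: patterns_def PiE_def J'_def\<close>)
  then have "emeasure limit_measure {w. restrict w J' \<in> PiE J' B'}
      = ennreal (\<Sum>y\<in>patterns J'. f (shift y) * limit_freq (J', y))"
    unfolding emeasure_limit_measure_cylinder[OF \<open>finite J'\<close> X'] sum_patterns_Int[OF \<open>finite J'\<close>]
    by simp
  also have "(\<Sum>y\<in>patterns J'. f (shift y) * limit_freq (J', y))
      = (\<Sum>y\<in>patterns J. f y * limit_freq (J, y))"
    using J f \<open>finite J'\<close> f_shift by (rule limit_freq_shift[where B = 1]) (simp add: f_def)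
  also have "\<dots> = (\<Sum>y\<in>patterns J \<inter> PiE J B. limit_freq (J, y))"
    by (simp add: sum_patterns_Int[OF J] f_def restrict_pattern)
  also have "ennreal \<dots> = emeasure limit_measure {w. restrict w J \<in> PiE J B}"
    by (rule emeasure_limit_measure_cylinder[OF J X, symmetric])
  finally show ?thesis
    by (simp only: J'_def B'_def)
qed

lemma limit_measure_shift_invariant: "distr limit_measure limit_measure shift = limit_measure"
proof (rule measure_eqI_PiM_infinite[where I = UNIV and M = "\<lambda>_. borel"])
  show "sets (distr limit_measure limit_measure shift) = sets (PiM UNIV (\<lambda>_. borel))"
    "sets limit_measure = sets (PiM UNIV (\<lambda>_. borel))"
    by (simp_all add: sets_limit_measure sets_PiM_equal_borel)
  show "finite_measure (distr limit_measure limit_measure shift)"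
    using prob_space.prob_space_distr[OF prob_space_limit_measure shift_measurable]
    by (simp add: prob_space_def)
next
  fix B :: "int \<Rightarrow> real set" and J :: "int set"
  assume J: "finite J" "J \<subseteq> UNIV" and B: "\<And>i. i \<in> J \<Longrightarrow> B i \<in> sets borel"
  then have "PiE J B \<in> sets (PiM J (\<lambda>_. borel))"
    by (simp add: sets_PiM_I_finite)
  then have "emeasure (distr limit_measure limit_measure shift) {w. restrict w J \<in> PiE J B}
      = emeasure limit_measure (shift -` {w. restrict w J \<in> PiE J B} \<inter> space limit_measure)"
    by (rule emeasure_distr[OF shift_measurable cylinder_in_sets])
  also have "shift -` {w. restrict w J \<in> PiE J B} \<inter> space limit_measure
      = {w. restrict w ((\<lambda>i. i + 1) ` J) \<in> PiE ((\<lambda>i. i + 1) ` J) (\<lambda>i. B (i - 1))}"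
    by (auto simp: space_limit_measure PiE_iff shiftn_apply)
  also have "emeasure limit_measure \<dots> = emeasure limit_measure {w. restrict w J \<in> PiE J B}"
    using J(1) B by (rule emeasure_limit_measure_shifted_cylinder)
  finally show "emeasure (distr limit_measure limit_measure shift) (prod_emb UNIV (\<lambda>_. borel) J (PiE J B))
      = emeasure limit_measure (prod_emb UNIV (\<lambda>_. borel) J (PiE J B))"
    by (simp only: prod_emb_UNIV_borel)
qed

definition invariant_limit_measure :: "(int \<Rightarrow> real) measure" where
  "invariant_limit_measure = restrict_space limit_measure \<Omega>"

lemma sets_\<Omega>: "\<Omega> \<in> sets limit_measure"
  using subshift_\<Omega> by (simp add: sets_limit_measure subshift_def)

lemma space_invariant_limit_measure: "space invariant_limit_measure = \<Omega>"
  by (simp add: invariant_limit_measure_def space_restrict_space space_limit_measure)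

lemma emeasure_limit_measure_Int_\<Omega>:
  assumes "S \<in> sets limit_measure"
  shows "emeasure limit_measure (S \<inter> \<Omega>) = emeasure limit_measure S"
proof -
  have "S \<inter> \<Omega> = S - (UNIV - \<Omega>)" by blast
  then show ?thesis
    using emeasure_Diff_null_set[OF null_sets_outside assms] by simp
qed

lemma emeasure_invariant_limit_measure:
  assumes "S \<in> sets limit_measure"
  shows "emeasure invariant_limit_measure (S \<inter> \<Omega>) = emeasure limit_measure S"
proof -
  have "emeasure invariant_limit_measure (S \<inter> \<Omega>) = emeasure limit_measure (S \<inter> \<Omega>)"
    unfolding invariant_limit_measure_def using sets_\<Omega> assms
    by (intro emeasure_restrict_space) (auto simp: space_limit_measure)
  with emeasure_limit_measure_Int_\<Omega>[OF assms] show ?thesis by simp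
qed

lemma shift_measurable_invariant_limit_measure:
  "shift \<in> measurable invariant_limit_measure invariant_limit_measure"
proof -
  have "shift \<in> \<Omega> \<rightarrow> \<Omega>"
    using subshift_\<Omega> by (auto simp: subshift_def)
  then show ?thesis
    unfolding invariant_limit_measure_def by (rule measurable_restrict_space3[OF shift_measurable])
qed

lemma invariant_limit_measure_shift_invariant:
  "distr invariant_limit_measure invariant_limit_measure shift = invariant_limit_measure"
proof (rule measure_eqI)
  fix X assume X: "X \<in> sets (distr invariant_limit_measure invariant_limit_measure shift)"
  then have "X \<in> sets limit_measure" "X \<subseteq> \<Omega>"
    using sets_\<Omega> by (auto simp: invariant_limit_measure_def sets_restrict_space_iff space_limit_measure)
  have "shift -` X \<in> sets limit_measure"
    using measurable_sets[OF shift_measurable \<open>X \<in> sets limit_measure\<close>] by (simp add: space_limit_measure)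
  have "emeasure (distr invariant_limit_measure invariant_limit_measure shift) X
      = emeasure invariant_limit_measure (shift -` X \<inter> \<Omega>)"
    using X by (simp add: emeasure_distr[OF shift_measurable_invariant_limit_measure]
        space_invariant_limit_measure)
  also have "\<dots> = emeasure limit_measure (shift -` X)"
    by (rule emeasure_invariant_limit_measure) fact
  also have "\<dots> = emeasure (distr limit_measure limit_measure shift) X"
    using \<open>X \<in> sets limit_measure\<close> by (simp add: emeasure_distr[OF shift_measurable] space_limit_measure)
  also have "\<dots> = emeasure invariant_limit_measure X"
    using emeasure_invariant_limit_measure[OF \<open>X \<in> sets limit_measure\<close>] \<open>X \<subseteq> \<Omega>\<close>
    by (simp add: limit_measure_shift_invariant Int_absorb2)
  finally show "emeasure (distr invariant_limit_measure invariant_limit_measure shift) X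
      = emeasure invariant_limit_measure X" .
qed simp

lemma invariant_prob_invariant_limit_measure: "invariant_prob \<Omega> invariant_limit_measure"
  unfolding invariant_prob_def
proof (intro conjI)
  have "emeasure limit_measure \<Omega> = 1"
    using emeasure_limit_measure_Int_\<Omega>[of UNIV] prob_space.emeasure_space_1[OF prob_space_limit_measure]
    by (simp add: space_limit_measure sets_limit_measure)
  then show "prob_space invariant_limit_measure"
    unfolding invariant_limit_measure_def by (rule prob_space_restrict_space[OF sets_\<Omega>])
  show "sets invariant_limit_measure = sets (restrict_space borel \<Omega>)"
    unfolding invariant_limit_measure_def by (rule sets_restrict_space_cong[OF sets_limit_measure])
qed (simp_all add: space_invariant_limit_measure shift_measurable_invariant_limit_measure
    invariant_limit_measure_shift_invariant)

lemma integral_invariant_limit_measure: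
  assumes "finite J" and "depends_only_on J f"
  shows "integral\<^sup>L invariant_limit_measure f = (\<Sum>y\<in>patterns J. f y * limit_freq (J, y))"
proof -
  interpret prob_space invariant_limit_measure
    by (rule invariant_probD(1)[OF invariant_prob_invariant_limit_measure])
  define C where "C y = {w. restrict w J = y} \<inter> \<Omega>" for y
  have C: "C y \<in> sets invariant_limit_measure" for y
    unfolding invariant_limit_measure_def C_def using sets_\<Omega>
    by (auto simp: sets_restrict_space_iff space_limit_measure sets_limit_measure
        borel_closed closed_restrict_eq)
  have measure_C: "measure invariant_limit_measure (C y) = limit_freq (J, y)" if "y \<in> patterns J" for y
  proof -
    have "{y} \<in> sets (PiM J (\<lambda>_. borel))"
      using that assms(1) by (intro singleton_in_sets_PiM) (auto simp: patterns_def PiE_iff)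
    then have "emeasure limit_measure {w. restrict w J \<in> {y}} = ennreal (limit_freq (J, y))"
      using that by (simp only: emeasure_limit_measure_cylinder[OF assms(1)]) simp
    then show ?thesis
      using emeasure_invariant_limit_measure[of "{w. restrict w J = y}"] limit_freq_nonneg
      by (simp add: C_def measure_def sets_limit_measure borel_closed closed_restrict_eq)
  qed
  have "integral\<^sup>L invariant_limit_measure f
      = integral\<^sup>L invariant_limit_measure (\<lambda>w. \<Sum>y\<in>patterns J. f y * indicator (C y) w)"
    using depends_only_on_eq_sum_patterns[OF subshift_\<Omega> assms]
    by (intro Bochner_Integration.integral_cong)
      (auto simp: space_invariant_limit_measure patterns_def indicator_def C_def)
  also have "\<dots> = (\<Sum>y\<in>patterns J. f y * measure invariant_limit_measure (C y))"
    using C by (simp add: Bochner_Integration.integral_sum integrable_real_indicator less_top[symmetric])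
  also have "\<dots> = (\<Sum>y\<in>patterns J. f y * limit_freq (J, y))"
    by (simp add: measure_C)
  finally show ?thesis .
qed

lemma le_integral_if_orbit_average_ge:
  assumes "finite J" and "depends_only_on J f"
    and "\<And>\<delta>. 0 < \<delta> \<Longrightarrow> eventually (\<lambda>k. a - \<delta> \<le> orbit_average f k) sequentially"
  shows "a \<le> integral\<^sup>L invariant_limit_measure f"
proof -
  have "(\<lambda>x. a - (\<Sum>y\<in>patterns J. f y * x (J, y))) limit_freq \<le> 0"
  proof (rule limit_freq_le_0)
    fix \<delta> :: real assume "0 < \<delta>"
    from assms(3)[OF this] show "eventually (\<lambda>k. a - (\<Sum>y\<in>patterns J. f y * freq k (J, y)) \<le> \<delta>) sequentially"
      by (rule eventually_mono) (simp add: orbit_average_depends_only_on[OF assms(1,2)])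
  qed (intro continuous_intros)
  then show ?thesis
    by (simp add: integral_invariant_limit_measure[OF assms(1,2)])
qed

lemma le_integral_cocycle_log_norm:
  assumes large: "\<And>k. e * real (len k) < cocycle_log_norm E (len k) (start k)" and "0 < N"
  shows "real N * e \<le> integral\<^sup>L invariant_limit_measure (cocycle_log_norm E N)"
proof (rule le_integral_if_orbit_average_ge[OF _ depends_only_on_cocycle_log_norm])
  obtain c where "0 \<le> c" and c: "\<And>n w. w \<in> \<Omega> \<Longrightarrow> cocycle_log_norm E n w \<le> real n * c"
    using subshift_log_norm_bound[OF subshift_\<Omega>] by blast
  have bound: "real N * e - 2 * real N * real N * c / real (len k) \<le> orbit_average (cocycle_log_norm E N) k"
    for k
  proof -
    define G where "G a j = cocycle_log_norm E a (shiftn (int j) (start k))" for a j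
    have "real N * G (len k) 0 \<le> (\<Sum>j<len k. G N j) + 2 * real N * real N * c"
    proof (rule subadditive_block_bound)
      show "G (a + b) j \<le> G b (j + a) + G a j" for a b j
        using cocycle_log_norm_subadditive[of E a b "shiftn (int j) (start k)"]
        by (simp add: G_def shiftn_shiftn add.commute)
      show "0 \<le> G a j" "G a j \<le> real a * c" for a j
        unfolding G_def by (simp_all add: cocycle_log_norm_nonneg c orbit_in)
    qed fact
    moreover have "real N * e * real (len k) \<le> real N * G (len k) 0"
      using large[of k] \<open>0 < N\<close> by (simp add: G_def)
    ultimately have "real N * e * real (len k) - 2 * real N * real N * c \<le> (\<Sum>j<len k. G N j)"
      by linarith
    then have "(real N * e * real (len k) - 2 * real N * real N * c) / real (len k)
        \<le> (\<Sum>j<len k. G N j) / real (len k)"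
      using len_pos[of k] by (intro divide_right_mono) simp_all
    moreover have "(real N * e * real (len k) - 2 * real N * real N * c) / real (len k)
        = real N * e - 2 * real N * real N * c / real (len k)"
      using len_pos[of k] by (simp add: field_simps)
    ultimately show ?thesis
      by (simp add: orbit_average_def G_def)
  qed
  show "eventually (\<lambda>k. real N * e - \<delta> \<le> orbit_average (cocycle_log_norm E N) k) sequentially"
    if "0 < \<delta>" for \<delta>
    using eventually_le_div_len[OF that, of "2 * real N * real N * c"]
  proof (rule eventually_mono)
    fix k assume "2 * real N * real N * c / real (len k) \<le> \<delta>"
    with bound[of k] show "real N * e - \<delta> \<le> orbit_average (cocycle_log_norm E N) k" by linarith
  qed
qed simp

end

section \<open>Uniform sublinear growth of the cocycle\<close>

lemma integral_cocycle_log_norm_tendsto_0: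
  assumes "subshift A \<Omega>" and "invariant_prob \<Omega> \<mu>" and "AE w in \<mu>. lyap_limit E w 0"
  shows "(\<lambda>N. integral\<^sup>L \<mu> (\<lambda>w. cocycle_log_norm E N w / real N)) \<longlonglongrightarrow> 0"
proof -
  interpret prob_space \<mu>
    by (rule invariant_probD(1)[OF assms(2)])
  obtain c where "0 \<le> c" and c: "\<And>n w. w \<in> \<Omega> \<Longrightarrow> cocycle_log_norm E n w \<le> real n * c"
    using subshift_log_norm_bound[OF assms(1)] by blast
  have "(\<lambda>N. integral\<^sup>L \<mu> (\<lambda>w. cocycle_log_norm E N w / real N)) \<longlonglongrightarrow> integral\<^sup>L \<mu> (\<lambda>_. 0)"
  proof (rule integral_dominated_convergence[where w = "\<lambda>_. c"])
    show "(\<lambda>w. cocycle_log_norm E N w / real N) \<in> borel_measurable \<mu>" for N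
      using depends_only_on_measurable[OF assms(1) _ depends_only_on_cocycle_log_norm, of N E]
      unfolding measurable_cong_sets[OF invariant_probD(3)[OF assms(2)] refl] by simp
    show "AE w in \<mu>. (\<lambda>N. cocycle_log_norm E N w / real N) \<longlonglongrightarrow> 0"
      using assms(3)
    proof (rule AE_mp, intro AE_I2 impI)
      fix w assume "lyap_limit E w 0"
      then have "((\<lambda>n. growth E n w) \<longlongrightarrow> 0) at_top"
        unfolding lyap_limit_def by (rule filterlim_mono) simp_all
      then have "((\<lambda>N. growth E (int N) w) \<longlongrightarrow> 0) sequentially"
        by (rule filterlim_compose) (rule filterlim_int_sequentially)
      then show "(\<lambda>N. cocycle_log_norm E N w / real N) \<longlonglongrightarrow> 0"
        by (simp add: growth_of_nat)
    qed
    show "AE w in \<mu>. norm (cocycle_log_norm E N w / real N) \<le> c" for N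
    proof (rule AE_I2)
      fix w assume "w \<in> space \<mu>"
      then have "w \<in> \<Omega>" using invariant_probD(2)[OF assms(2)] by simp
      then show "norm (cocycle_log_norm E N w / real N) \<le> c"
        using c[of w N] cocycle_log_norm_nonneg[of E N w] \<open>0 \<le> c\<close>
        by (cases "N = 0") (simp_all add: field_simps)
    qed
  qed simp_all
  then show ?thesis by simp
qed

text \<open>Unique ergodicity enters here: the measure built from the bad orbit segments must be the
  given one, whose Lyapunov exponent vanishes.\<close>

lemma cocycle_log_norm_uniformly_sublinear:
  assumes "subshift A \<Omega>" and "strictly_ergodic \<Omega>" and "invariant_prob \<Omega> \<mu>"
    and "AE w in \<mu>. lyap_limit E w 0" and "0 < e"
  shows "eventually (\<lambda>n. \<forall>w\<in>\<Omega>. cocycle_log_norm E n w \<le> e * real n) sequentially"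
proof (rule ccontr)
  assume "\<not> ?thesis"
  then have "\<forall>k. \<exists>n\<ge>Suc k. \<exists>w\<in>\<Omega>. e * real n < cocycle_log_norm E n w"
    by (auto simp: eventually_sequentially not_le)
  then obtain len where len: "\<And>k. Suc k \<le> len k"
    and "\<And>k. \<exists>w\<in>\<Omega>. e * real (len k) < cocycle_log_norm E (len k) w"
    by metis
  then obtain start where start: "\<And>k. start k \<in> \<Omega>"
    and large: "\<And>k. e * real (len k) < cocycle_log_norm E (len k) (start k)"
    by metis
  interpret orbit_segments A \<Omega> len start
    using assms(1) len start by unfold_locales (simp_all add: Suc_le_eq)
  have \<mu>: "\<mu> = invariant_limit_measure"
    using assms(2,3) invariant_prob_invariant_limit_measure unfolding strictly_ergodic_def by blast
  have "e \<le> integral\<^sup>L \<mu> (\<lambda>w. cocycle_log_norm E N w / real N)" if "1 \<le> N" for N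
  proof -
    have "real N * e \<le> integral\<^sup>L \<mu> (cocycle_log_norm E N)"
      using le_integral_cocycle_log_norm[OF large] that by (simp add: \<mu>)
    then show ?thesis
      using that by (simp add: field_simps)
  qed
  then have "e \<le> 0"
    by (intro LIMSEQ_le_const[OF integral_cocycle_log_norm_tendsto_0[OF assms(1,3,4)]]) blast
  with \<open>0 < e\<close> show False by simp
qed

lemma uniform_limit_growth_0:
  assumes "subshift A \<Omega>"
    and sublinear: "\<And>e. 0 < e \<Longrightarrow> eventually (\<lambda>n. \<forall>w\<in>\<Omega>. cocycle_log_norm E n w \<le> e * real n) sequentially"
  shows "uniform_limit \<Omega> (\<lambda>n w. growth E n w) (\<lambda>_. 0) (sup at_top at_bot)"
  unfolding uniform_limit_iff
proof (intro allI impI)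
  fix e :: real assume "0 < e"
  then obtain M where M: "\<And>m w. M \<le> m \<Longrightarrow> w \<in> \<Omega> \<Longrightarrow> cocycle_log_norm E m w \<le> e / 2 * real m"
    using sublinear[of "e / 2"] by (auto simp: eventually_sequentially)
  have small: "\<bar>cocycle_log_norm E m w / real m\<bar> < e" if "M < m" and "w \<in> \<Omega>" for m w
  proof -
    have "0 < e * real m" using that \<open>0 < e\<close> by simp
    then show ?thesis
      using M[of m w] that cocycle_log_norm_nonneg[of E m w] by (simp add: field_simps)
  qed
  have "eventually (\<lambda>n. \<forall>w\<in>\<Omega>. dist (growth E n w) 0 < e) at_top"
    unfolding eventually_at_top_linorder
  proof (intro exI allI impI ballI)
    fix n :: int and w assume n: "int (Suc M) \<le> n" and "w \<in> \<Omega>"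
    then obtain m where "n = int m"
      using nonneg_int_cases[of n] by (metis of_nat_0_le_iff order_trans)
    with n \<open>w \<in> \<Omega>\<close> show "dist (growth E n w) 0 < e"
      using small[of m w] by (simp add: growth_of_nat)
  qed
  moreover have "eventually (\<lambda>n. \<forall>w\<in>\<Omega>. dist (growth E n w) 0 < e) at_bot"
    unfolding eventually_at_bot_linorder
  proof (intro exI allI impI ballI)
    fix n :: int and w assume n: "n \<le> - int (Suc M)" and "w \<in> \<Omega>"
    then obtain m where "n = - int m"
      using nonneg_int_cases[of "- n"] by (metis minus_minus neg_0_le_iff_le of_nat_0_le_iff order_trans)
    moreover have "shiftn (- int m) w \<in> \<Omega>"
      by (rule subshift_shiftn_closed[OF assms(1) \<open>w \<in> \<Omega>\<close>])
    ultimately show "dist (growth E n w) 0 < e"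
      using n small[of m "shiftn (- int m) w"] by (simp add: growth_uminus_of_nat)
  qed
  ultimately show "eventually (\<lambda>n. \<forall>w\<in>\<Omega>. dist (growth E n w) 0 < e) (sup at_top at_bot)"
    by (simp add: eventually_sup)
qed

theorem lemma4p2:
  fixes A :: "real set" and \<Omega> :: "(int \<Rightarrow> real) set" and \<mu> :: "(int \<Rightarrow> real) measure" and E :: real
  assumes "subshift A \<Omega>" and "strictly_ergodic \<Omega>"
    and "invariant_prob \<Omega> \<mu>"
    and "AE w in \<mu>. lyap_limit E w 0"
  shows "uniform_cocycle \<Omega> E"
proof -
  have "uniform_limit \<Omega> (\<lambda>n w. growth E n w) (\<lambda>_. 0) (sup at_top at_bot)"
    using assms(1) cocycle_log_norm_uniformly_sublinear[OF assms]
    by (rule uniform_limit_growth_0)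
  then show ?thesis
    unfolding uniform_cocycle_def by blast
qed

end
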